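(* For the discrete series representations $\omega_{\ell,\pm}$ ($\ell>1/2$), the localisation of the Dirac operator $D$ has zero kernel. For a principal series representation $\pi_{q,\tau}$ ($q\ge1/4$, $0\le\tau\le1$), the localisation of $D$ at $\pi_{q,\tau}$ (acting on $V_{q,\tau}\oplus V_{q,\tau}$) has nonzero kernel if and only if $(q,\tau)$ lies on the parabolic arc \[ \mathcal{Q}=\{(q,\tau): q+2\tau(\tau-1)=0,\ \tau\in[1/2-1/\sqrt8,\ 1/2+1/\sqrt8]\}. \] At each $(q,\tau)\in\mathcal{Q}$ the kernel (the Dirac cohomology localised at $\pi_{q,\tau}$) is one-dimensional, spanned by the 2-spinor \[ \sqrt{1-\tau}\begin{pmatrix} f_\tau\\ 0\end{pmatrix}-\sqrt{\tau}\begin{pmatrix} 0\\ f_{\tau-1}\end{pmatrix}. \]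
   Context: $G$ is the universal cover of $\mathrm{SL}_2(\mathbb{R})$, $\mathfrak{A}=C^*_r(G)$, $X_0,X_1,X_2$ an orthonormal basis of $\mathfrak{sl}_2(\mathbb{R})$ acting on functions on $G$ as right-invariant vector fields. The Dirac operator is $D=i\begin{pmatrix}X_0& X_1+iX_2\\ X_1-iX_2& -X_0\end{pmatrix}$, an unbounded operator on the Hilbert $\mathfrak{A}$-module $\mathfrak{A}\oplus\mathfrak{A}$. The localisation of $D$ at a representation $(V,\pi)$ in the reduced dual is $D\otimes1$ on $(\mathfrak{A}\oplus\mathfrak{A})\otimes_{\mathfrak{A}}V\cong V\oplus V$; it equals $-\mathbb{H}$, where, with $H_k$ defined by $\exp(-itH_k)=\pi(\exp(tX_k))$ and $H_\pm=H_1\pm iH_2$, $\mathbb{H}=\begin{pmatrix}H_0&H_+\\H_-&-H_0\end{pmatrix}$. The principal series $\pi_{q,\tau}$ on $V_{q,\tau}$ ($q\ge1/4$, $0\le\tau\le1$, Casimir value $q$) has orthonormal basis $f_m$, $m\in\tau+\mathbb{Z}$, with $H_0f_m=mf_m$, $H_+f_m=(q+m(m+1))^{1/2}f_{m+1}$, $H_-f_m=(q+m(m-1))^{1/2}f_{m-1}$. The discrete series $\omega_{\ell,+}$ (resp. $\omega_{\ell,-}$), $\ell>1/2$, with Casimir value $q=\ell(1-\ell)$, has orthonormal basis $f_m$, $m\in\{\ell,\ell+1,\dots\}$ (resp. $m\in\{-\ell,-\ell-1,\dots\}$), with the same formulas except $H_-f_\ell=0$ and $H_+f_{-\ell}=0$.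 *)

theory Defs
  imports "HOL-Analysis.Analysis"
begin

text \<open>A representation is modelled by its weight index set I (a subset of the reals)
  and Casimir value q. Vectors of V are coefficient functions x (x m = coefficient
  of the orthonormal basis vector f m), supported in I and square summable.\<close>

definition ladder_space :: "real set \<Rightarrow> (real \<Rightarrow> complex) set" where
  "ladder_space I = {x. (\<forall>m. m \<notin> I \<longrightarrow> x m = 0) \<and> (\<lambda>m. (cmod (x m))^2) summable_on I}"

definition basis_vec :: "real \<Rightarrow> real \<Rightarrow> complex" where
  "basis_vec m = (\<lambda>n. if n = m then 1 else 0)"

text \<open>H_+ f_m = Hplus_coef q I m * f_(m+1);  H_- f_m = Hminus_coef q I m * f_(m-1)
  (zero when the target index is not a weight).\<close>
definition Hplus_coef :: "real \<Rightarrow> real set \<Rightarrow> real \<Rightarrow> real" where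
  "Hplus_coef q I m = (if m \<in> I \<and> m + 1 \<in> I then sqrt (q + m * (m + 1)) else 0)"

definition Hminus_coef :: "real \<Rightarrow> real set \<Rightarrow> real \<Rightarrow> real" where
  "Hminus_coef q I m = (if m \<in> I \<and> m - 1 \<in> I then sqrt (q + m * (m - 1)) else 0)"

definition H0_op :: "(real \<Rightarrow> complex) \<Rightarrow> real \<Rightarrow> complex" where
  "H0_op x = (\<lambda>n. complex_of_real n * x n)"

definition Hplus_op :: "real \<Rightarrow> real set \<Rightarrow> (real \<Rightarrow> complex) \<Rightarrow> real \<Rightarrow> complex" where
  "Hplus_op q I x = (\<lambda>n. complex_of_real (Hplus_coef q I (n - 1)) * x (n - 1))"

definition Hminus_op :: "real \<Rightarrow> real set \<Rightarrow> (real \<Rightarrow> complex) \<Rightarrow> real \<Rightarrow> complex" where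
  "Hminus_op q I x = (\<lambda>n. complex_of_real (Hminus_coef q I (n + 1)) * x (n + 1))"

text \<open>The localised Dirac operator D (x) 1 = - \<bbbH> acting (formally) on V (+) V.\<close>
definition dirac_loc :: "real \<Rightarrow> real set \<Rightarrow> (real \<Rightarrow> complex) \<times> (real \<Rightarrow> complex)
    \<Rightarrow> (real \<Rightarrow> complex) \<times> (real \<Rightarrow> complex)" where
  "dirac_loc q I uv = (\<lambda>n. - (H0_op (fst uv) n + Hplus_op q I (snd uv) n),
                       \<lambda>n. - (Hminus_op q I (fst uv) n - H0_op (snd uv) n))"

definition dirac_kernel :: "real \<Rightarrow> real set \<Rightarrow> ((real \<Rightarrow> complex) \<times> (real \<Rightarrow> complex)) set" where
  "dirac_kernel q I = {uv. fst uv \<in> ladder_space I \<and> snd uv \<in> ladder_space I \<and>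
                           dirac_loc q I uv = (\<lambda>_. 0, \<lambda>_. 0)}"

definition principal_index :: "real \<Rightarrow> real set" where
  "principal_index \<tau> = {m. \<exists>k::int. m = \<tau> + of_int k}"

definition discrete_plus_index :: "real \<Rightarrow> real set" where
  "discrete_plus_index l = {m. \<exists>k::nat. m = l + of_nat k}"

definition discrete_minus_index :: "real \<Rightarrow> real set" where
  "discrete_minus_index l = {m. \<exists>k::nat. m = - l - of_nat k}"

definition arcQ :: "(real \<times> real) set" where
  "arcQ = {(q, \<tau>). q + 2 * \<tau> * (\<tau> - 1) = 0 \<and>
             1/2 - 1 / sqrt 8 \<le> \<tau> \<and> \<tau> \<le> 1/2 + 1 / sqrt 8}"

end

theory Submission
  imports Defs
begin

(* The localised Dirac operator shifts weights by one, so the kernel equations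
   decouple into independent 2x2 blocks: for each n the pair (u n, v (n-1)) satisfies
       n u_n + a v_{n-1} = 0,      a u_n - (n-1) v_{n-1} = 0,
   with a = sqrt (q + n(n-1)) when both n and n-1 are weights, and with one of the
   equations degenerating to a diagonal one at an edge of the weight set.  The determinant
   of a full block is -(q + 2 n (n-1)).  For the discrete series all blocks
   are nondegenerate because the weights stay away from the interval (-1/2, 1/2).  For the
   principal series with q >= 1/4 the only possibly singular block is n = tau, and it is
   singular exactly when q + 2 tau (tau - 1) = 0, i.e. on the arc Q; there it has rank one
   and its solutions are the multiples of (sqrt (1 - tau), - sqrt tau). *)

section \<open>The block equations of the kernel\<close>

lemma dirac_loc_zero_iff:
  "dirac_loc q I (u, v) = (\<lambda>_. 0, \<lambda>_. 0) \<longleftrightarrow>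
     (\<forall>n. of_real n * u n + of_real (Hplus_coef q I (n - 1)) * v (n - 1) = 0 \<and>
          of_real (Hminus_coef q I n) * u n - of_real (n - 1) * v (n - 1) = 0)"
proof -
  have "dirac_loc q I (u, v) = (\<lambda>_. 0, \<lambda>_. 0) \<longleftrightarrow>
     (\<forall>n. of_real n * u n + of_real (Hplus_coef q I (n - 1)) * v (n - 1) = 0) \<and>
     (\<forall>m. of_real (Hminus_coef q I (m + 1)) * u (m + 1) - of_real m * v m = 0)"
    unfolding dirac_loc_def H0_op_def Hplus_op_def Hminus_op_def prod.inject fun_eq_iff
    by (simp only: fst_conv snd_conv neg_equal_0_iff_equal)
  also have "(\<forall>m. of_real (Hminus_coef q I (m + 1)) * u (m + 1) - of_real m * v m = 0) \<longleftrightarrow>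
     (\<forall>n. of_real (Hminus_coef q I n) * u n - of_real (n - 1) * v (n - 1) = (0::complex))"
    by (metis add_diff_cancel_right' diff_add_cancel)
  finally show ?thesis by blast
qed

lemma zero_in_dirac_kernel: "(\<lambda>_. 0, \<lambda>_. 0) \<in> dirac_kernel q I"
  by (simp add: dirac_kernel_def ladder_space_def dirac_loc_def H0_op_def Hplus_op_def
      Hminus_op_def)

text \<open>When both n-1 and n are weights, raising from n-1 and lowering from n use the same
  coefficient, so each full block is a symmetric 2x2 matrix.\<close>
lemma ladder_coefs_coincide:
  assumes "n \<in> I" "n - 1 \<in> I"
  shows "Hplus_coef q I (n - 1) = sqrt (q + n * (n - 1))"
    and "Hminus_coef q I n = sqrt (q + n * (n - 1))"
  using assms by (simp_all add: Hplus_coef_def Hminus_coef_def algebra_simps)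

lemma block_trivial:
  fixes u v :: "'a::real_field" and n a :: real
  assumes e1: "of_real n * u + of_real a * v = 0"
    and e2: "of_real a * u - of_real (n - 1) * v = 0"
    and det: "a * a + n * (n - 1) \<noteq> 0"
  shows "u = 0 \<and> v = 0"
proof -
  have "of_real (a * a + n * (n - 1)) * u =
        of_real (n - 1) * (of_real n * u + of_real a * v) + of_real a * (of_real a * u - of_real (n - 1) * v)"
    by (simp add: algebra_simps)
  also have "\<dots> = 0" using e1 e2 by simp
  finally have du: "of_real (a * a + n * (n - 1)) * u = 0" .
  have "of_real (a * a + n * (n - 1)) * v =
        of_real a * (of_real n * u + of_real a * v) - of_real n * (of_real a * u - of_real (n - 1) * v)"
    by (simp add: algebra_simps)
  also have "\<dots> = 0" using e1 e2 by simp
  finally have dv: "of_real (a * a + n * (n - 1)) * v = 0" .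
  show ?thesis using du dv det by (metis mult_eq_0_iff of_real_eq_0_iff)
qed

text \<open>The block at weight n is nondegenerate when its equations force u n = v (n-1) = 0:
  at the lower and upper edges of the weight set a single diagonal entry must be nonzero,
  inside it the determinant must be nonzero (and the coefficient real).\<close>
definition block_nondegenerate :: "real \<Rightarrow> real set \<Rightarrow> real \<Rightarrow> bool" where
  "block_nondegenerate q I n \<longleftrightarrow>
     (n \<in> I \<and> n - 1 \<notin> I \<longrightarrow> n \<noteq> 0) \<and>
     (n \<notin> I \<and> n - 1 \<in> I \<longrightarrow> n - 1 \<noteq> 0) \<and>
     (n \<in> I \<and> n - 1 \<in> I \<longrightarrow> q + n * (n - 1) \<ge> 0 \<and> q + 2 * n * (n - 1) \<noteq> 0)"

lemma block_vanishes:
  assumes K: "(u, v) \<in> dirac_kernel q I" and nd: "block_nondegenerate q I n"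
  shows "u n = 0 \<and> v (n - 1) = 0"
proof -
  from K have uI: "m \<notin> I \<Longrightarrow> u m = 0" and vI: "m \<notin> I \<Longrightarrow> v m = 0" for m
    by (auto simp: dirac_kernel_def ladder_space_def)
  from K have E1: "of_real n * u n + of_real (Hplus_coef q I (n - 1)) * v (n - 1) = 0"
    and E2: "of_real (Hminus_coef q I n) * u n - of_real (n - 1) * v (n - 1) = 0"
    by (auto simp: dirac_kernel_def dirac_loc_zero_iff)
  consider "n \<in> I" "n - 1 \<in> I" | "n \<in> I" "n - 1 \<notin> I" | "n \<notin> I" "n - 1 \<in> I"
    | "n \<notin> I" "n - 1 \<notin> I" by blast
  then show ?thesis
  proof cases
    case 1
    define a where "a = sqrt (q + n * (n - 1))"
    have pos: "q + n * (n - 1) \<ge> 0" and det: "q + 2 * n * (n - 1) \<noteq> 0"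
      using nd 1 by (auto simp: block_nondegenerate_def)
    have "a * a + n * (n - 1) = q + 2 * n * (n - 1)"
      using pos by (simp add: a_def)
    then show ?thesis
      using block_trivial[of n "u n" a "v (n - 1)"] E1 E2 det ladder_coefs_coincide[OF 1]
      by (simp add: a_def)
  qed (use uI vI E1 E2 nd in \<open>auto simp: block_nondegenerate_def Hplus_coef_def Hminus_coef_def\<close>)
qed

text \<open>Since the blocks cover all coordinates, the kernel is trivial when every block is
  nondegenerate.\<close>
lemma kernel_trivial:
  assumes "\<And>n. block_nondegenerate q I n"
  shows "dirac_kernel q I = {(\<lambda>_. 0, \<lambda>_. 0)}"
proof (intro equalityI subsetI)
  fix w assume K: "w \<in> dirac_kernel q I"
  obtain u v where w: "w = (u, v)" by fastforce
  have zero: "u n = 0 \<and> v (n - 1) = 0" for n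
    using block_vanishes K assms unfolding w by blast
  then have "u = (\<lambda>_. 0)" by auto
  moreover have "v = (\<lambda>_. 0)" using zero by (metis add_diff_cancel_right')
  ultimately show "w \<in> {(\<lambda>_. 0, \<lambda>_. 0)}" using w by simp
qed (simp add: zero_in_dirac_kernel)

section \<open>Discrete series\<close>

text \<open>Two weights one apart and both of absolute value at least l > 1/2 have the same sign,
  so their product is at least l(l+1).\<close>
lemma adjacent_weights_product:
  fixes n l :: real
  assumes l: "l > 1/2" and n: "l \<le> \<bar>n\<bar>" and n1: "l \<le> \<bar>n - 1\<bar>"
  shows "n * (n - 1) \<ge> l * (l + 1)"
proof (cases "n \<ge> 0")
  case True
  then have "n \<ge> l + 1" "n - 1 \<ge> l" using l n n1 by linarith+
  then have "(l + 1) * l \<le> n * (n - 1)" by (intro mult_mono) (use l in auto)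
  then show ?thesis by (simp add: algebra_simps)
next
  case False
  then have "-n \<ge> l" "1 - n \<ge> l + 1" using n by linarith+
  then have "(l + 1) * l \<le> (1 - n) * (-n)" by (intro mult_mono) (use l in auto)
  then show ?thesis by (simp add: algebra_simps)
qed

lemma discrete_kernel_trivial:
  assumes l: "l > 1/2" and weights: "\<And>m. m \<in> I \<Longrightarrow> l \<le> \<bar>m\<bar>"
  shows "dirac_kernel (l * (1 - l)) I = {(\<lambda>_. 0, \<lambda>_. 0)}"
proof (rule kernel_trivial)
  fix n
  have "l * (1 - l) + n * (n - 1) > 0 \<and> l * (1 - l) + 2 * n * (n - 1) > 0"
    if "n \<in> I" "n - 1 \<in> I"
  proof -
    have "n * (n - 1) \<ge> l * (l + 1)"
      using adjacent_weights_product[OF l weights[OF that(1)] weights[OF that(2)]] .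
    then have "l * (1 - l) + n * (n - 1) \<ge> 2 * l"
      and "l * (1 - l) + 2 * n * (n - 1) \<ge> l * l + 3 * l"
      by (simp_all add: algebra_simps)
    then show ?thesis using l zero_le_square[of l] by linarith
  qed
  moreover have "n \<noteq> 0" if "n \<in> I" using weights[OF that] l by auto
  moreover have "n - 1 \<noteq> 0" if "n - 1 \<in> I" using weights[OF that] l by auto
  ultimately show "block_nondegenerate (l * (1 - l)) I n"
    unfolding block_nondegenerate_def by force
qed

lemma discrete_plus_weights: "m \<in> discrete_plus_index l \<Longrightarrow> l > 0 \<Longrightarrow> l \<le> \<bar>m\<bar>"
  unfolding discrete_plus_index_def by force

lemma discrete_minus_weights: "m \<in> discrete_minus_index l \<Longrightarrow> l > 0 \<Longrightarrow> l \<le> \<bar>m\<bar>"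
  unfolding discrete_minus_index_def by force

section \<open>Principal series\<close>

text \<open>The principal series weight set tau + Z is invariant under shifts by one, so it has
  no edges.\<close>
lemma principal_index_shift: "n - 1 \<in> principal_index \<tau> \<longleftrightarrow> n \<in> principal_index \<tau>"
proof -
  have "(\<exists>k::int. n - 1 = \<tau> + of_int k) \<longleftrightarrow> (\<exists>k::int. n = \<tau> + of_int k)"
    by (metis (no_types, opaque_lifting) add.assoc diff_add_cancel of_int_1 of_int_add
        of_int_diff add_diff_eq)
  then show ?thesis by (simp add: principal_index_def)
qed

lemma principal_tau_weights: "\<tau> \<in> principal_index \<tau>" "\<tau> - 1 \<in> principal_index \<tau>"
  by (simp_all add: principal_index_def) (metis of_int_1 of_int_minus)+

text \<open>If q \<ge> 1/4, a weight with singular block satisfies n(n-1) < 0, i.e. 0 < n < 1; in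
  tau + Z with tau in [0,1] this forces n = tau.\<close>
lemma principal_singular_weight:
  assumes n: "n \<in> principal_index \<tau>" and t: "0 \<le> \<tau>" "\<tau> \<le> 1" and q: "q \<ge> 1/4"
    and z: "q + 2 * n * (n - 1) = 0"
  shows "n = \<tau>"
proof -
  obtain k :: int where k: "n = \<tau> + of_int k" using n by (auto simp: principal_index_def)
  have "n * (n - 1) < 0" using z q by linarith
  then have "0 < n \<and> n < 1" by (auto simp: mult_less_0_iff)
  then have "k = 0" using k t by linarith
  then show ?thesis using k by simp
qed

lemma arcQ_iff:
  assumes q: "q \<ge> 1/4"
  shows "(q, \<tau>) \<in> arcQ \<longleftrightarrow> q + 2 * \<tau> * (\<tau> - 1) = 0"
proof
  assume z: "q + 2 * \<tau> * (\<tau> - 1) = 0"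
  have s: "1 / sqrt 8 = sqrt (1/8)" by (simp add: real_sqrt_divide)
  have sq: "(\<tau> - 1/2)^2 \<le> 1/8" using q z by (simp add: power2_eq_square algebra_simps)
  have "\<tau> - 1/2 \<le> sqrt (1/8)" by (rule real_le_rsqrt) (use sq in simp)
  moreover have "1/2 - \<tau> \<le> sqrt (1/8)"
    by (rule real_le_rsqrt) (use sq in \<open>simp add: power2_commute\<close>)
  ultimately show "(q, \<tau>) \<in> arcQ" using z by (auto simp: arcQ_def s)
qed (simp add: arcQ_def)

lemma arcQ_tau_interior:
  assumes q: "q \<ge> 1/4" and a: "(q, \<tau>) \<in> arcQ"
  shows "0 < \<tau> \<and> \<tau> < 1"
proof -
  have "q + 2 * \<tau> * (\<tau> - 1) = 0" using a q arcQ_iff by blast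
  then have "\<tau> * (\<tau> - 1) < 0" using q by linarith
  then show ?thesis by (auto simp: mult_less_0_iff)
qed

text \<open>Every block of the principal series is nondegenerate, except the block at tau on the
  arc.  (The weight set has no edges, and q + n(n-1) \<ge> q - 1/4 \<ge> 0.)\<close>
lemma principal_block_nondegenerate:
  assumes t: "0 \<le> \<tau>" "\<tau> \<le> 1" and q: "q \<ge> 1/4" and ne: "n \<noteq> \<tau> \<or> (q, \<tau>) \<notin> arcQ"
  shows "block_nondegenerate q (principal_index \<tau>) n"
proof -
  have "n * (n - 1) \<ge> -1/4"
    using zero_le_power2[of "n - 1/2"] by (simp add: power2_eq_square algebra_simps)
  then have "q + n * (n - 1) \<ge> 0" using q by linarith
  moreover have "q + 2 * n * (n - 1) \<noteq> 0" if "n \<in> principal_index \<tau>"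
    using principal_singular_weight[OF that t q] arcQ_iff[OF q] ne by blast
  ultimately show ?thesis
    unfolding block_nondegenerate_def principal_index_shift by blast
qed

lemma principal_kernel_off_arc:
  assumes "0 \<le> \<tau>" "\<tau> \<le> 1" "q \<ge> 1/4" "(q, \<tau>) \<notin> arcQ"
  shows "dirac_kernel q (principal_index \<tau>) = {(\<lambda>_. 0, \<lambda>_. 0)}"
  using kernel_trivial[OF principal_block_nondegenerate] assms by blast

lemma rank_one_block_solutions:
  fixes t b x y :: "'a::field"
  assumes tb: "t * t + b * b = 1"
  shows "(t * t * x + t * b * y = 0 \<and> t * b * x + b * b * y = 0) \<longleftrightarrow>
         (\<exists>c. x = c * b \<and> y = - c * t)"
proof
  assume "t * t * x + t * b * y = 0 \<and> t * b * x + b * b * y = 0"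
  then have "t * (t * x + b * y) = 0" and "b * (t * x + b * y) = 0"
    by (simp_all add: algebra_simps)
  moreover have "t \<noteq> 0 \<or> b \<noteq> 0" using tb by auto
  ultimately have line: "t * x + b * y = 0" by auto
  have "x = (t * t + b * b) * x" using tb by simp
  also have "\<dots> = (b * x - t * y) * b + (t * x + b * y) * t" by algebra
  finally have "x = (b * x - t * y) * b" using line by simp
  moreover have "y = (t * t + b * b) * y" using tb by simp
  then have "y = - (b * x - t * y) * t + (t * x + b * y) * b" by algebra
  then have "y = - (b * x - t * y) * t" using line by simp
  ultimately show "\<exists>c. x = c * b \<and> y = - c * t" by blast
qed (auto simp: algebra_simps)

lemma finite_support_in_ladder_space:
  assumes "finite F" "F \<subseteq> I" "\<And>m. m \<notin> F \<Longrightarrow> x m = 0"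
  shows "x \<in> ladder_space I"
proof -
  have "(\<lambda>m. (cmod (x m))^2) summable_on F" using assms(1) by simp
  then have "(\<lambda>m. (cmod (x m))^2) summable_on I"
    by (rule summable_on_subset_banach[rotated] | subst summable_on_cong_neutral[where T = F])
       (use assms in auto)
  then show ?thesis using assms unfolding ladder_space_def by auto
qed

text \<open>On the arc the block at tau is the rank one block with t = sqrt tau and
  b = sqrt (1 - tau): its coupling coefficient is sqrt (q + tau (tau - 1)) = t b.\<close>
lemma arc_block_solutions:
  fixes x y :: complex
  assumes q: "q \<ge> 1/4" and a: "(q, \<tau>) \<in> arcQ"
  shows "(of_real \<tau> * x + of_real (Hplus_coef q (principal_index \<tau>) (\<tau> - 1)) * y = 0 \<and>
          of_real (Hminus_coef q (principal_index \<tau>) \<tau>) * x - of_real (\<tau> - 1) * y = 0) \<longleftrightarrow>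
         (\<exists>c. x = c * of_real (sqrt (1 - \<tau>)) \<and> y = - c * of_real (sqrt \<tau>))"
proof -
  define t where "t = sqrt \<tau>"
  define b where "b = sqrt (1 - \<tau>)"
  have t01: "0 < \<tau>" "\<tau> < 1" using arcQ_tau_interior[OF q a] by auto
  have tt: "t * t = \<tau>" and bb: "b * b = 1 - \<tau>" using t01 by (simp_all add: t_def b_def)
  have "q + \<tau> * (\<tau> - 1) = \<tau> * (1 - \<tau>)" using a q arcQ_iff by (simp add: algebra_simps)
  then have "sqrt (q + \<tau> * (\<tau> - 1)) = t * b" by (simp add: t_def b_def real_sqrt_mult)
  then have coupling: "Hplus_coef q (principal_index \<tau>) (\<tau> - 1) = t * b"
    "Hminus_coef q (principal_index \<tau>) \<tau> = t * b"
    using ladder_coefs_coincide[OF principal_tau_weights] by simp_all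
  have eq1: "of_real \<tau> * x + of_real (t * b) * y =
        of_real t * of_real t * x + of_real t * of_real b * y"
    by (simp add: tt flip: of_real_mult)
  have eq2: "of_real (t * b) * x - of_real (\<tau> - 1) * y =
        of_real t * of_real b * x + of_real b * of_real b * y"
    by (simp add: bb algebra_simps flip: of_real_mult)
  have "t * t + b * b = 1" using tt bb by simp
  then have rank_one: "(of_real t * of_real t * x + of_real t * of_real b * y = 0 \<and>
              of_real t * of_real b * x + of_real b * of_real b * y = 0) \<longleftrightarrow>
             (\<exists>c. x = c * of_real b \<and> y = - c * of_real t)"
    by (intro rank_one_block_solutions) (metis of_real_1 of_real_add of_real_mult)
  show ?thesis
    unfolding t_def[symmetric] b_def[symmetric] coupling eq1 eq2 by (rule rank_one)
qed

text \<open>On the arc, every multiple of the spinor sqrt (1 - tau) f_tau (+) - sqrt tau f_(tau-1)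
  lies in the kernel: it solves the block at tau, and all other blocks see zero.\<close>
lemma arc_spinor_multiple_in_kernel:
  assumes t: "0 \<le> \<tau>" "\<tau> \<le> 1" and q: "q \<ge> 1/4" and a: "(q, \<tau>) \<in> arcQ"
  shows "(\<lambda>n. c * (complex_of_real (sqrt (1 - \<tau>)) * basis_vec \<tau> n),
          \<lambda>n. c * (- complex_of_real (sqrt \<tau>) * basis_vec (\<tau> - 1) n)) \<in> dirac_kernel q (principal_index \<tau>)"
    (is "(?u, ?v) \<in> _")
proof -
  have "?u \<in> ladder_space (principal_index \<tau>)"
    using principal_tau_weights
    by (intro finite_support_in_ladder_space[of "{\<tau>}"]) (auto simp: basis_vec_def)
  moreover have "?v \<in> ladder_space (principal_index \<tau>)"
    using principal_tau_weights
    by (intro finite_support_in_ladder_space[of "{\<tau> - 1}"]) (auto simp: basis_vec_def)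
  moreover have "dirac_loc q (principal_index \<tau>) (?u, ?v) = (\<lambda>_. 0, \<lambda>_. 0)"
    unfolding dirac_loc_zero_iff
  proof
    fix n
    have block: "of_real \<tau> * (c * of_real (sqrt (1 - \<tau>))) +
          of_real (Hplus_coef q (principal_index \<tau>) (\<tau> - 1)) * (- c * of_real (sqrt \<tau>)) = 0 \<and>
        of_real (Hminus_coef q (principal_index \<tau>) \<tau>) * (c * of_real (sqrt (1 - \<tau>))) -
          of_real (\<tau> - 1) * (- c * of_real (sqrt \<tau>)) = 0"
      using arc_block_solutions[OF q a] by blast
    then show "of_real n * ?u n + of_real (Hplus_coef q (principal_index \<tau>) (n - 1)) * ?v (n - 1) = 0 \<and>
        of_real (Hminus_coef q (principal_index \<tau>) n) * ?u n - of_real (n - 1) * ?v (n - 1) = 0"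
      by (cases "n = \<tau>") (simp_all add: basis_vec_def)
  qed
  ultimately show ?thesis by (simp add: dirac_kernel_def)
qed

text \<open>On the arc the kernel is exactly the line spanned by that spinor: a kernel vector
  vanishes on all nondegenerate blocks, and on the block at tau it is a multiple of it.\<close>
lemma principal_kernel_on_arc:
  assumes t: "0 \<le> \<tau>" "\<tau> \<le> 1" and q: "q \<ge> 1/4" and a: "(q, \<tau>) \<in> arcQ"
  shows "dirac_kernel q (principal_index \<tau>) =
     {(\<lambda>n. c * (complex_of_real (sqrt (1 - \<tau>)) * basis_vec \<tau> n),
       \<lambda>n. c * (- complex_of_real (sqrt \<tau>) * basis_vec (\<tau> - 1) n)) | c :: complex. True}"
    (is "?K = ?S")
proof (intro equalityI subsetI)
  fix w assume K: "w \<in> ?K"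
  obtain u v where w: "w = (u, v)" by fastforce
  have off: "u n = 0 \<and> v (n - 1) = 0" if "n \<noteq> \<tau>" for n
    using block_vanishes[OF K[unfolded w] principal_block_nondegenerate[OF t q]] that by blast
  have "of_real \<tau> * u \<tau> + of_real (Hplus_coef q (principal_index \<tau>) (\<tau> - 1)) * v (\<tau> - 1) = 0 \<and>
        of_real (Hminus_coef q (principal_index \<tau>) \<tau>) * u \<tau> - of_real (\<tau> - 1) * v (\<tau> - 1) = 0"
    using K unfolding w by (simp add: dirac_kernel_def dirac_loc_zero_iff)
  then obtain c where c: "u \<tau> = c * of_real (sqrt (1 - \<tau>))" "v (\<tau> - 1) = - c * of_real (sqrt \<tau>)"
    using arc_block_solutions[OF q a] by blast
  have "u = (\<lambda>n. c * (complex_of_real (sqrt (1 - \<tau>)) * basis_vec \<tau> n))"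
    using off c(1) by (auto simp: basis_vec_def)
  moreover have "v = (\<lambda>n. c * (- complex_of_real (sqrt \<tau>) * basis_vec (\<tau> - 1) n))"
  proof
    fix m show "v m = c * (- complex_of_real (sqrt \<tau>) * basis_vec (\<tau> - 1) m)"
      using off[of "m + 1"] c(2) by (cases "m = \<tau> - 1") (auto simp: basis_vec_def)
  qed
  ultimately show "w \<in> ?S" using w by blast
qed (use arc_spinor_multiple_in_kernel[OF t q a] in blast)

lemma arc_spinor_nonzero:
  assumes "\<tau> < 1"
  shows "(\<lambda>n. complex_of_real (sqrt (1 - \<tau>)) * basis_vec \<tau> n,
          \<lambda>n. - complex_of_real (sqrt \<tau>) * basis_vec (\<tau> - 1) n) \<noteq> (\<lambda>_. 0, \<lambda>_. 0)"
proof
  assume "(\<lambda>n. complex_of_real (sqrt (1 - \<tau>)) * basis_vec \<tau> n,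
          \<lambda>n. - complex_of_real (sqrt \<tau>) * basis_vec (\<tau> - 1) n) = (\<lambda>_. 0, \<lambda>_. 0)"
  then have "complex_of_real (sqrt (1 - \<tau>)) * basis_vec \<tau> \<tau> = 0"
    by (metis fst_conv)
  then show False using assms by (simp add: basis_vec_def)
qed

theorem mainTheorem13:
  shows "(\<forall>l::real. l > 1/2 \<longrightarrow>
            dirac_kernel (l * (1 - l)) (discrete_plus_index l) = {(\<lambda>_. 0, \<lambda>_. 0)} \<and>
            dirac_kernel (l * (1 - l)) (discrete_minus_index l) = {(\<lambda>_. 0, \<lambda>_. 0)})
       \<and> (\<forall>q \<tau> :: real. q \<ge> 1/4 \<longrightarrow> 0 \<le> \<tau> \<longrightarrow> \<tau> \<le> 1 \<longrightarrow>
            (dirac_kernel q (principal_index \<tau>) \<noteq> {(\<lambda>_. 0, \<lambda>_. 0)} \<longleftrightarrow> (q, \<tau>) \<in> arcQ))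
       \<and> (\<forall>q \<tau> :: real. q \<ge> 1/4 \<longrightarrow> 0 \<le> \<tau> \<longrightarrow> \<tau> \<le> 1 \<longrightarrow> (q, \<tau>) \<in> arcQ \<longrightarrow>
            (let s = (\<lambda>n. complex_of_real (sqrt (1 - \<tau>)) * basis_vec \<tau> n,
                      \<lambda>n. - complex_of_real (sqrt \<tau>) * basis_vec (\<tau> - 1) n)
             in s \<noteq> (\<lambda>_. 0, \<lambda>_. 0) \<and>
                dirac_kernel q (principal_index \<tau>) =
                  {(\<lambda>n. c * fst s n, \<lambda>n. c * snd s n) | c :: complex. True}))"
proof (intro conjI allI impI)
  fix l :: real assume "l > 1/2"
  then show "dirac_kernel (l * (1 - l)) (discrete_plus_index l) = {(\<lambda>_. 0, \<lambda>_. 0)}"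
    and "dirac_kernel (l * (1 - l)) (discrete_minus_index l) = {(\<lambda>_. 0, \<lambda>_. 0)}"
    using discrete_kernel_trivial discrete_plus_weights discrete_minus_weights by simp_all
next
  fix q \<tau> :: real assume q: "q \<ge> 1/4" and t: "0 \<le> \<tau>" "\<tau> \<le> 1"
  show "dirac_kernel q (principal_index \<tau>) \<noteq> {(\<lambda>_. 0, \<lambda>_. 0)} \<longleftrightarrow> (q, \<tau>) \<in> arcQ"
  proof
    assume a: "(q, \<tau>) \<in> arcQ"
    have "(\<lambda>n. 1 * (complex_of_real (sqrt (1 - \<tau>)) * basis_vec \<tau> n),
           \<lambda>n. 1 * (- complex_of_real (sqrt \<tau>) * basis_vec (\<tau> - 1) n))
          \<in> dirac_kernel q (principal_index \<tau>)"
      unfolding principal_kernel_on_arc[OF t q a] by blast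
    then show "dirac_kernel q (principal_index \<tau>) \<noteq> {(\<lambda>_. 0, \<lambda>_. 0)}"
      using arc_spinor_nonzero arcQ_tau_interior[OF q a] by auto
  qed (use principal_kernel_off_arc[OF t q] in blast)
next
  fix q \<tau> :: real assume q: "q \<ge> 1/4" and t: "0 \<le> \<tau>" "\<tau> \<le> 1" and a: "(q, \<tau>) \<in> arcQ"
  then show "let s = (\<lambda>n. complex_of_real (sqrt (1 - \<tau>)) * basis_vec \<tau> n,
                      \<lambda>n. - complex_of_real (sqrt \<tau>) * basis_vec (\<tau> - 1) n)
             in s \<noteq> (\<lambda>_. 0, \<lambda>_. 0) \<and>
                dirac_kernel q (principal_index \<tau>) =
                  {(\<lambda>n. c * fst s n, \<lambda>n. c * snd s n) | c :: complex. True}"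
    using arc_spinor_nonzero arcQ_tau_interior[OF q a] principal_kernel_on_arc[OF t q a]
    by (simp add: Let_def)
qed

end
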